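(* Let $(p,f)$ be an SCF-RT that is rationalizable within the class of symmetric RUM-CFs, and let $(x,y)\in C\setminus D$. If there exists $z\in X$ such that $t(x,z)$ and $t(y,z)$ are defined and $t(x,z)\leq t(y,z)$, or $t(z,x)$ and $t(z,y)$ are defined and $t(z,x)\geq t(z,y)$, then every symmetric RUM-CF $(u,g,r)$ rationalizing $(p,f)$ satisfies $u(x)\geq u(y)$. If there exists $z\in X$ with $t(x,z)<t(y,z)$ or $t(z,x)>t(z,y)$ (the respective quantities being defined), then every such model satisfies $u(x)>u(y)$.
   Context: $X$ is a finite set of options; $C=\{(x,y): x,y\in X,\ x\neq y\}$; $D\subseteq C$ is a fixed non-empty set with $(x,y)\in D\Rightarrow (y,x)\in D$. An SCF $p$ assigns to each $(x,y)\in D$ a number $p(x,y)>0$ with $p(x,y)+p(y,x)=1$. An SCF-RT is a pair $(p,f)$ where $p$ is an SCF and $f$ assigns to each $(x,y)\in D$ a strictly positive density $f(x,y)$ on $\mathbb{R}^+$ with cdf $F(x,y)$. A RUM is a pair $(u,g)$ with $u:X\to\mathbb{R}$ and $g$ assigning to each $(x,y)\in C$ a density $g(x,y)$ on $\mathbb{R}$ (cdf $G(x,y)$) with $\int v\,g(x,y)(v)\,dv=u(x)-u(y)=:v(x,y)$, $g(x,y)(v)=g(y,x)(-v)$ for all $v$, and connected support. A RUM-CF is $(u,g,r)$ with $(u,g)$ a RUM and $r:\mathbb{R}^{++}\to\mathbb{R}^+$ continuous, strictly decreasing where $r(v)>0$, $\lim_{v\to0}r(v)=\infty$, $\lim_{v\to\infty}r(v)=0$;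 $r^{-1}(t)$ ($t>0$) is the inverse of $r$ restricted to $\{r>0\}$. It rationalizes $(p,f)$ if for all $(x,y)\in D$: $G(x,y)(0)=p(y,x)$ and $\frac{1-G(x,y)(r^{-1}(t))}{1-G(x,y)(0)}=F(x,y)(t)$ for all $t>0$. A RUM-CF is symmetric if each $g(x,y)$, $(x,y)\in C$, is symmetric around its mean: $g(x,y)(v(x,y)+\delta)=g(x,y)(v(x,y)-\delta)$ for all $\delta\geq0$. For $(a,b)\in D$ with $p(a,b)>p(b,a)$, $t(a,b)>0$ is defined by $F(a,b)(t(a,b))=p(b,a)/p(a,b)$; it is undefined otherwise. *)

theory Defs
  imports "HOL-Analysis.Analysis"
begin

text \<open>Options are the elements of a finite type 'a (so X = UNIV).
  Pairs of distinct options: C.\<close>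

definition pairsC :: "('a \<times> 'a) set" where
  "pairsC = {(x, y). x \<noteq> y}"

definition valid_domain :: "('a \<times> 'a) set \<Rightarrow> bool" where
  "valid_domain D \<longleftrightarrow> D \<subseteq> pairsC \<and> D \<noteq> {} \<and> (\<forall>x y. (x, y) \<in> D \<longrightarrow> (y, x) \<in> D)"

definition is_SCF :: "('a \<times> 'a) set \<Rightarrow> ('a \<Rightarrow> 'a \<Rightarrow> real) \<Rightarrow> bool" where
  "is_SCF D p \<longleftrightarrow> (\<forall>x y. (x, y) \<in> D \<longrightarrow> p x y > 0 \<and> p x y + p y x = 1)"

definition pos_density :: "(real \<Rightarrow> real) \<Rightarrow> bool" where
  "pos_density h \<longleftrightarrow> (\<forall>t\<ge>0. h t > 0) \<and> set_integrable lborel {0..} h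
     \<and> set_lebesgue_integral lborel {0..} h = 1"

definition cdf_pos :: "(real \<Rightarrow> real) \<Rightarrow> real \<Rightarrow> real" where
  "cdf_pos h t = set_lebesgue_integral lborel {0..t} h"

definition is_SCF_RT :: "('a \<times> 'a) set \<Rightarrow> ('a \<Rightarrow> 'a \<Rightarrow> real) \<Rightarrow> ('a \<Rightarrow> 'a \<Rightarrow> real \<Rightarrow> real) \<Rightarrow> bool" where
  "is_SCF_RT D p f \<longleftrightarrow> is_SCF D p \<and> (\<forall>x y. (x, y) \<in> D \<longrightarrow> pos_density (f x y))"

definition real_density :: "(real \<Rightarrow> real) \<Rightarrow> bool" where
  "real_density h \<longleftrightarrow> h \<in> borel_measurable lborel \<and> (\<forall>v. h v \<ge> 0) \<and> integrable lborel h
     \<and> integral\<^sup>L lborel h = 1"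

definition cdf_real :: "(real \<Rightarrow> real) \<Rightarrow> real \<Rightarrow> real" where
  "cdf_real h v = set_lebesgue_integral lborel {..v} h"

definition dens_support :: "(real \<Rightarrow> real) \<Rightarrow> real set" where
  "dens_support h = closure {v. h v > 0}"

definition is_RUM :: "('a \<Rightarrow> real) \<Rightarrow> ('a \<Rightarrow> 'a \<Rightarrow> real \<Rightarrow> real) \<Rightarrow> bool" where
  "is_RUM u g \<longleftrightarrow> (\<forall>x y. (x, y) \<in> pairsC \<longrightarrow>
       real_density (g x y)
     \<and> integrable lborel (\<lambda>v. v * g x y v)
     \<and> (\<integral>v. v * g x y v \<partial>lborel) = u x - u y
     \<and> (\<forall>v. g x y v = g y x (- v))
     \<and> connected (dens_support (g x y)))"

definition is_CF :: "(real \<Rightarrow> real) \<Rightarrow> bool" where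
  "is_CF r \<longleftrightarrow> (\<forall>v>0. r v \<ge> 0) \<and> continuous_on {0<..} r
     \<and> (\<forall>v w. 0 < v \<and> v < w \<and> r v > 0 \<and> r w > 0 \<longrightarrow> r w < r v)
     \<and> filterlim r at_top (at_right 0)
     \<and> (r \<longlongrightarrow> 0) at_top"

definition rinv :: "(real \<Rightarrow> real) \<Rightarrow> real \<Rightarrow> real" where
  "rinv r t = (THE v. v > 0 \<and> r v > 0 \<and> r v = t)"

definition is_RUM_CF :: "('a \<Rightarrow> real) \<Rightarrow> ('a \<Rightarrow> 'a \<Rightarrow> real \<Rightarrow> real) \<Rightarrow> (real \<Rightarrow> real) \<Rightarrow> bool" where
  "is_RUM_CF u g r \<longleftrightarrow> is_RUM u g \<and> is_CF r"

definition rationalizes ::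
  "('a \<times> 'a) set \<Rightarrow> ('a \<Rightarrow> real) \<Rightarrow> ('a \<Rightarrow> 'a \<Rightarrow> real \<Rightarrow> real) \<Rightarrow> (real \<Rightarrow> real)
   \<Rightarrow> ('a \<Rightarrow> 'a \<Rightarrow> real) \<Rightarrow> ('a \<Rightarrow> 'a \<Rightarrow> real \<Rightarrow> real) \<Rightarrow> bool" where
  "rationalizes D u g r p f \<longleftrightarrow> is_RUM_CF u g r \<and>
     (\<forall>x y. (x, y) \<in> D \<longrightarrow>
        cdf_real (g x y) 0 = p y x \<and>
        (\<forall>t>0. (1 - cdf_real (g x y) (rinv r t)) / (1 - cdf_real (g x y) 0) = cdf_pos (f x y) t))"

definition symmetric_RUM_CF :: "('a \<Rightarrow> real) \<Rightarrow> ('a \<Rightarrow> 'a \<Rightarrow> real \<Rightarrow> real) \<Rightarrow> (real \<Rightarrow> real) \<Rightarrow> bool" where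
  "symmetric_RUM_CF u g r \<longleftrightarrow> is_RUM_CF u g r \<and>
     (\<forall>x y. (x, y) \<in> pairsC \<longrightarrow>
        (\<forall>\<delta>\<ge>0. g x y (u x - u y + \<delta>) = g x y (u x - u y - \<delta>)))"

definition tval :: "('a \<times> 'a) set \<Rightarrow> ('a \<Rightarrow> 'a \<Rightarrow> real) \<Rightarrow> ('a \<Rightarrow> 'a \<Rightarrow> real \<Rightarrow> real)
   \<Rightarrow> 'a \<Rightarrow> 'a \<Rightarrow> real option" where
  "tval D p f a b = (if (a, b) \<in> D \<and> p a b > p b a
     then Some (THE t. t > 0 \<and> cdf_pos (f a b) t = p b a / p a b) else None)"

end

theory Submission
  imports Defs
begin

(* In a symmetric model the density g(a,b) is symmetric about m = u(a) - u(b), so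
   G(a,b)(2m) = 1 - G(a,b)(0) = p(a,b). Evaluating the rationalization identity at t = r(2m)
   gives F(a,b)(r(2m)) = p(b,a)/p(a,b); hence t(a,b) = r(2(u(a) - u(b))) whenever t(a,b) is
   defined. That r(2m) > 0 at all follows from F(a,b)(t) -> 0 as t -> 0. As r is strictly
   decreasing, comparing t(x,z) with t(y,z), or t(z,x) with t(z,y), compares u(x) with u(y). *)

lemma real_density_integrable_indicator:
  assumes "real_density h" "A \<in> sets borel"
  shows "integrable lborel (\<lambda>x. indicator A x * h x)"
  using assms integrable_mult_indicator[of A lborel h] unfolding real_density_def by auto

lemma cdf_real_mono:
  assumes "real_density h"
  shows "mono (cdf_real h)"
proof
  fix a b :: real assume "a \<le> b"
  moreover have "\<And>x. h x \<ge> 0" using assms unfolding real_density_def by auto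
  ultimately have "\<And>x. indicator {..a} x * h x \<le> indicator {..b} x * h x"
    by (auto simp: indicator_def)
  then show "cdf_real h a \<le> cdf_real h b"
    unfolding cdf_real_def set_lebesgue_integral_def
    by (auto intro!: integral_mono real_density_integrable_indicator[OF assms])
qed

lemma cdf_real_reflect:
  assumes "real_density h" "\<And>w. h (2*m - w) = h w"
  shows "cdf_real h (2*m - c) = 1 - cdf_real h c"
proof -
  have h: "integrable lborel h" "integral\<^sup>L lborel h = 1"
    using assms(1) unfolding real_density_def by auto
  have below: "integrable lborel (\<lambda>x. indicator {..<c} x * h x)"
    by (rule real_density_integrable_indicator[OF assms(1)]) simp
  have "cdf_real h (2*m - c) = (\<integral>x. indicator {..2*m - c} (2*m + (-1)*x) * h (2*m + (-1)*x) \<partial>lborel)"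
    unfolding cdf_real_def set_lebesgue_integral_def
    by (subst lborel_integral_real_affine[where c="-1" and t="2*m"]) auto
  also have "\<dots> = (\<integral>x. h x - indicator {..<c} x * h x \<partial>lborel)"
    using assms(2) by (intro Bochner_Integration.integral_cong) (auto simp: indicator_def)
  also have "\<dots> = 1 - (\<integral>x. indicator {..<c} x * h x \<partial>lborel)"
    using Bochner_Integration.integral_diff[OF h(1) below] h(2) by simp
  also have "(\<integral>x. indicator {..<c} x * h x \<partial>lborel) = cdf_real h c"
    \<comment> \<open>the two integrands differ only on the null set {c}\<close>
    unfolding cdf_real_def set_lebesgue_integral_def
    using borel_measurable_integrable[OF below]
      borel_measurable_integrable[OF real_density_integrable_indicator[OF assms(1), of "{..c}"]]
    by (intro integral_cong_AE) (auto intro: AE_mp[OF AE_lborel_singleton[of c]] simp: indicator_def)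
  finally show ?thesis .
qed

lemma cdf_pos_eq_integral:
  assumes "pos_density h" "0 \<le> t"
  shows "cdf_pos h t = integral {0..t} h" "h integrable_on {0..t}"
proof -
  have "set_integrable lborel {0..t} h"
    using assms unfolding pos_density_def by (auto intro: set_integrable_subset)
  then show "cdf_pos h t = integral {0..t} h" "h integrable_on {0..t}"
    unfolding cdf_pos_def
    by (rule set_borel_integral_eq_integral(2), rule set_borel_integral_eq_integral(1))
qed

lemma cdf_pos_tendsto_0:
  assumes "pos_density h"
  shows "(cdf_pos h \<longlongrightarrow> 0) (at_right 0)"
proof -
  have "continuous_on {0..1} (\<lambda>t. integral {0..t} h)"
    by (rule indefinite_integral_continuous_1[OF cdf_pos_eq_integral(2)[OF assms]]) simp
  then have "((\<lambda>t. integral {0..t} h) \<longlongrightarrow> integral {0..0} h) (at 0 within {0..1})"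
    unfolding continuous_on_def by (meson atLeastAtMost_iff order_refl zero_le_one)
  then have "((\<lambda>t. integral {0..t} h) \<longlongrightarrow> 0) (at_right 0)"
    by (simp add: at_within_Icc_at_right)
  moreover have "\<forall>\<^sub>F t in at_right 0. integral {0..t} h = cdf_pos h t"
    using cdf_pos_eq_integral(1)[OF assms] by (auto simp: eventually_at_right_field intro: exI[of _ 1])
  ultimately show ?thesis by (rule Lim_transform_eventually)
qed

lemma cdf_pos_strict_mono:
  assumes "pos_density h" "0 \<le> s" "s < t"
  shows "cdf_pos h s < cdf_pos h t"
proof -
  have hpos: "\<And>x. x \<ge> 0 \<Longrightarrow> h x > 0" using assms(1) unfolding pos_density_def by auto
  have int: "integrable lborel (\<lambda>x. indicator A x * h x)" if "A \<subseteq> {0..}" "A \<in> sets borel" for A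
    using set_integrable_subset[of lborel "{0..}" h A] assms(1) that
    unfolding pos_density_def set_integrable_def by auto
  define I where "I = (\<integral>x. indicator {s<..t} x * h x \<partial>lborel)"
  have nonneg: "\<And>x. 0 \<le> indicator {s<..t} x * h x"
    using assms hpos by (auto simp: indicator_def intro: less_imp_le)
  have "cdf_pos h t = (\<integral>x. indicator {0..s} x * h x + indicator {s<..t} x * h x \<partial>lborel)"
    unfolding cdf_pos_def set_lebesgue_integral_def
    by (rule Bochner_Integration.integral_cong) (use assms in \<open>auto split: split_indicator\<close>)
  also have "\<dots> = cdf_pos h s + I"
    unfolding cdf_pos_def set_lebesgue_integral_def I_def using assms
    by (subst Bochner_Integration.integral_add) (auto intro!: int)
  finally have split: "cdf_pos h t = cdf_pos h s + I" .
  have "I \<noteq> 0"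
  proof
    assume "I = 0"
    then have "AE x in lborel. indicator {s<..t} x * h x = 0"
      unfolding I_def using nonneg assms by (subst (asm) integral_nonneg_eq_0_iff_AE) (auto intro!: int)
    then have "AE x in lborel. x \<notin> {s<..t}"
    proof (rule eventually_mono)
      fix x assume "indicator {s<..t} x * h x = 0"
      then show "x \<notin> {s<..t}" using hpos[of x] assms(2) by (auto simp: indicator_def)
    qed
    then have "emeasure lborel {s<..t} = 0"
      by (subst (asm) AE_iff_measurable[of "{s<..t}"]) auto
    then show False using assms by simp
  qed
  moreover have "0 \<le> I" unfolding I_def using nonneg by (rule Bochner_Integration.integral_nonneg)
  ultimately show ?thesis using split by linarith
qed

lemma cdf_pos_level_unique:
  assumes "pos_density h" "s > 0" "cdf_pos h s = c"
  shows "(THE t. t > 0 \<and> cdf_pos h t = c) = s"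
proof (rule the_equality)
  fix t assume "t > 0 \<and> cdf_pos h t = c"
  then show "t = s"
    using cdf_pos_strict_mono[OF assms(1), of t s] cdf_pos_strict_mono[OF assms(1), of s t] assms
    by (cases t s rule: linorder_cases) auto
qed (use assms in auto)

lemma is_CF_less_iff:
  assumes "is_CF r" "0 < v" "0 < w" "r v > 0" "r w > 0"
  shows "r v < r w \<longleftrightarrow> w < v"
  using assms unfolding is_CF_def by (cases v w rule: linorder_cases) (auto, fastforce+)

lemma is_CF_large_near_0:
  assumes "is_CF r" "b > 0"
  obtains s where "0 < s" "s < b" "c < r s"
proof -
  have "\<forall>\<^sub>F s in at_right 0. c < r s \<and> s < b"
    using assms filterlim_at_top_dense[of r "at_right 0"] unfolding is_CF_def
    by (auto intro: eventually_conj order_tendstoD(2)[OF tendsto_ident_at])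
  moreover have "\<forall>\<^sub>F s in at_right 0. 0 < (s::real)" by (rule eventually_at_right_less)
  ultimately show thesis
    using eventually_happens'[OF trivial_limit_at_right_real] that
    by (metis (mono_tags, lifting) eventually_conj)
qed

lemma is_CF_pos_below:
  assumes "is_CF r" "0 < s" "s \<le> w" "r w > 0"
  shows "r s > 0"
proof (rule ccontr)
  assume "\<not> r s > 0"
  obtain s' where s': "0 < s'" "s' < s" "r w < r s'"
    using is_CF_large_near_0[OF assms(1,2)] by blast
  have "continuous_on {s'..s} r"
    using assms(1) s' unfolding is_CF_def by (auto elim: continuous_on_subset)
  then obtain q where q: "s' \<le> q" "q \<le> s" "r q = r w"
    using IVT2'[of r s "r w" s'] \<open>\<not> r s > 0\<close> s' assms(4) by auto
  have "q \<noteq> s" using q assms(4) \<open>\<not> r s > 0\<close> by auto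
  with q assms(3) have "q < w" by simp
  then show False using is_CF_less_iff[OF assms(1), of w q] q s' assms by simp
qed

lemma is_CF_attains:
  assumes "is_CF r" "t > 0"
  obtains w where "w > 0" "r w = t"
proof -
  have "\<forall>\<^sub>F x in at_top. r x < t"
    using assms order_tendstoD(2) unfolding is_CF_def by blast
  then obtain N where N: "\<And>x. x \<ge> N \<Longrightarrow> r x < t"
    unfolding eventually_at_top_linorder by auto
  define b where "b = max N 1"
  have b: "b > 0" "r b < t" using N by (auto simp: b_def)
  obtain s where s: "0 < s" "s < b" "t < r s" using is_CF_large_near_0[OF assms(1) b(1)] .
  have "continuous_on {s..b} r"
    using assms(1) s unfolding is_CF_def by (auto elim: continuous_on_subset)
  then obtain w where "s \<le> w" "r w = t"
    using IVT2'[of r b t s] b s by auto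
  with s show thesis by (intro that) auto
qed

lemma rinv_apply:
  assumes "is_CF r" "w > 0" "r w > 0"
  shows "rinv r (r w) = w"
  unfolding rinv_def
proof (rule the_equality)
  fix v assume "0 < v \<and> 0 < r v \<and> r v = r w"
  then show "v = w"
    using is_CF_less_iff[OF assms(1), of v w] is_CF_less_iff[OF assms(1), of w v] assms
    by (cases v w rule: linorder_cases) auto
qed (use assms in auto)

lemma rinv_pos_and_inverse:
  assumes "is_CF r" "t > 0"
  shows "rinv r t > 0" "r (rinv r t) = t"
proof -
  obtain w where "w > 0" "r w = t" using is_CF_attains[OF assms] .
  then show "rinv r t > 0" "r (rinv r t) = t"
    using rinv_apply[OF assms(1), of w] assms by auto
qed

lemma rationalized_CF_pos:
  fixes G :: "real \<Rightarrow> real"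
  assumes "is_CF r" "pos_density h" "mono G" "c > 0" "G c < 1" "G 0 < 1"
    and rat: "\<forall>t>0. (1 - G (rinv r t)) / (1 - G 0) = cdf_pos h t"
  shows "r c > 0"
proof (rule ccontr)
  assume "\<not> r c > 0"
  define \<rho> where "\<rho> = (1 - G c) / (1 - G 0)"
  have "\<rho> > 0" using assms unfolding \<rho>_def by simp
  then have "\<forall>\<^sub>F t in at_right 0. 0 < t \<and> cdf_pos h t < \<rho>"
    by (intro eventually_conj eventually_at_right_less
        order_tendstoD(2)[OF cdf_pos_tendsto_0[OF assms(2)]])
  then obtain t where t: "0 < t" "cdf_pos h t < \<rho>"
    using eventually_happens'[OF trivial_limit_at_right_real] by blast
  define w where "w = rinv r t"
  have w: "w > 0" "r w = t" using rinv_pos_and_inverse[OF assms(1) t(1)] by (simp_all add: w_def)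
  have "w < c"
  proof (rule ccontr)
    assume "\<not> w < c"
    then have "r c > 0" using is_CF_pos_below[OF assms(1,4), of w] w t by simp
    then show False using \<open>\<not> r c > 0\<close> by simp
  qed
  then have "G w \<le> G c" using assms(3) by (simp add: monoD)
  then have "\<rho> \<le> (1 - G w) / (1 - G 0)"
    unfolding \<rho>_def using assms(6) by (simp add: divide_right_mono)
  also have "\<dots> = cdf_pos h t" using rat t(1) by (simp add: w_def)
  finally show False using t(2) by simp
qed

lemma symmetric_binary_model_response_time:
  assumes "is_CF r" "pos_density h" "real_density k"
    and sym: "\<forall>\<delta>\<ge>0. k (m + \<delta>) = k (m - \<delta>)"
    and q: "cdf_real k 0 = q" "0 < q" "q < 1 - q"
    and rat: "\<forall>t>0. (1 - cdf_real k (rinv r t)) / (1 - cdf_real k 0) = cdf_pos h t"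
  shows "m > 0" "r (2*m) > 0" "(THE t. t > 0 \<and> cdf_pos h t = q / (1 - q)) = r (2*m)"
proof -
  have "k (2*m - w) = k w" for w
    using sym[rule_format, of "w - m"] sym[rule_format, of "m - w"] by (cases "m \<le> w") simp_all
  then have G2m: "cdf_real k (2*m) = 1 - q"
    using cdf_real_reflect[OF assms(3), of m 0] q(1) by simp
  show "m > 0"
  proof (rule ccontr)
    assume "\<not> m > 0"
    then have "cdf_real k (2*m) \<le> cdf_real k 0"
      using cdf_real_mono[OF assms(3)] by (simp add: monoD)
    then show False using G2m q by simp
  qed
  show r2m: "r (2*m) > 0"
    using rationalized_CF_pos[OF assms(1,2) cdf_real_mono[OF assms(3)]] \<open>m > 0\<close> G2m q rat
    by simp
  have "cdf_pos h (r (2*m)) = q / (1 - q)"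
    using rat[rule_format, OF r2m] rinv_apply[OF assms(1) _ r2m] \<open>m > 0\<close> G2m q(1) by simp
  then show "(THE t. t > 0 \<and> cdf_pos h t = q / (1 - q)) = r (2*m)"
    by (rule cdf_pos_level_unique[OF assms(2) r2m])
qed

lemma tval_eq_SomeD:
  assumes "valid_domain D" "is_SCF_RT D p f" "symmetric_RUM_CF u g r" "rationalizes D u g r p f"
    and "tval D p f a b = Some t"
  shows "u b < u a" "t > 0" "r (2 * (u a - u b)) = t"
proof -
  have ab: "(a, b) \<in> D" "p b a < p a b"
    and t: "t = (THE t. t > 0 \<and> cdf_pos (f a b) t = p b a / p a b)"
    using assms(5) unfolding tval_def by (auto split: if_splits)
  have "(a, b) \<in> pairsC" "(b, a) \<in> D"
    using assms(1) ab(1) unfolding valid_domain_def by auto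
  then have "p a b + p b a = 1" "p b a > 0" "pos_density (f a b)"
    using assms(2) ab(1) unfolding is_SCF_RT_def is_SCF_def by auto
  moreover from this(1) have "p a b = 1 - p b a" by simp
  moreover have "is_CF r" "real_density (g a b)"
      "\<forall>\<delta>\<ge>0. g a b (u a - u b + \<delta>) = g a b (u a - u b - \<delta>)"
    using assms(3) \<open>(a, b) \<in> pairsC\<close>
    unfolding symmetric_RUM_CF_def is_RUM_CF_def is_RUM_def by auto
  moreover have "cdf_real (g a b) 0 = p b a"
      "\<forall>t>0. (1 - cdf_real (g a b) (rinv r t)) / (1 - cdf_real (g a b) 0) = cdf_pos (f a b) t"
    using assms(4) ab(1) unfolding rationalizes_def by blast+
  ultimately have "u a - u b > 0" "r (2 * (u a - u b)) > 0"
      "(THE t. t > 0 \<and> cdf_pos (f a b) t = p b a / p a b) = r (2 * (u a - u b))"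
    using symmetric_binary_model_response_time[of r "f a b" "g a b" "u a - u b" "p b a"] ab(2)
    by simp_all
  then show "u b < u a" "t > 0" "r (2 * (u a - u b)) = t" using t by simp_all
qed

lemma tval_common_target_iff:
  assumes "valid_domain D" "is_SCF_RT D p f" "symmetric_RUM_CF u g r" "rationalizes D u g r p f"
    and "tval D p f x z = Some a" "tval D p f y z = Some b"
  shows "a < b \<longleftrightarrow> u y < u x" "a \<le> b \<longleftrightarrow> u y \<le> u x"
proof -
  have "is_CF r" using assms(3) unfolding symmetric_RUM_CF_def is_RUM_CF_def by simp
  note x = tval_eq_SomeD[OF assms(1-4,5)] and y = tval_eq_SomeD[OF assms(1-4,6)]
  show "a < b \<longleftrightarrow> u y < u x"
    using is_CF_less_iff[OF \<open>is_CF r\<close>, of "2 * (u x - u z)" "2 * (u y - u z)"] x y by simp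
  then show "a \<le> b \<longleftrightarrow> u y \<le> u x"
    using is_CF_less_iff[OF \<open>is_CF r\<close>, of "2 * (u y - u z)" "2 * (u x - u z)"] x y
    by (simp add: not_less[symmetric])
qed

lemma tval_common_source_iff:
  assumes "valid_domain D" "is_SCF_RT D p f" "symmetric_RUM_CF u g r" "rationalizes D u g r p f"
    and "tval D p f z x = Some a" "tval D p f z y = Some b"
  shows "b < a \<longleftrightarrow> u y < u x" "b \<le> a \<longleftrightarrow> u y \<le> u x"
proof -
  have "is_CF r" using assms(3) unfolding symmetric_RUM_CF_def is_RUM_CF_def by simp
  note x = tval_eq_SomeD[OF assms(1-4,5)] and y = tval_eq_SomeD[OF assms(1-4,6)]
  show "b < a \<longleftrightarrow> u y < u x"
    using is_CF_less_iff[OF \<open>is_CF r\<close>, of "2 * (u z - u y)" "2 * (u z - u x)"] x y by simp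
  then show "b \<le> a \<longleftrightarrow> u y \<le> u x"
    using is_CF_less_iff[OF \<open>is_CF r\<close>, of "2 * (u z - u x)" "2 * (u z - u y)"] x y
    by (simp add: not_less[symmetric])
qed

theorem theorem2:
  fixes D :: "('a::finite \<times> 'a) set"
    and p :: "'a \<Rightarrow> 'a \<Rightarrow> real"
    and f :: "'a \<Rightarrow> 'a \<Rightarrow> real \<Rightarrow> real"
    and x y :: 'a
  assumes "valid_domain D"
    and "is_SCF_RT D p f"
    and "\<exists>u g r. symmetric_RUM_CF u g r \<and> rationalizes D u g r p f"
    and "(x, y) \<in> pairsC - D"
  shows "((\<exists>z. (\<exists>a b. tval D p f x z = Some a \<and> tval D p f y z = Some b \<and> a \<le> b)
              \<or> (\<exists>a b. tval D p f z x = Some a \<and> tval D p f z y = Some b \<and> a \<ge> b))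
           \<longrightarrow> (\<forall>u g r. symmetric_RUM_CF u g r \<and> rationalizes D u g r p f \<longrightarrow> u x \<ge> u y))
       \<and> ((\<exists>z. (\<exists>a b. tval D p f x z = Some a \<and> tval D p f y z = Some b \<and> a < b)
              \<or> (\<exists>a b. tval D p f z x = Some a \<and> tval D p f z y = Some b \<and> a > b))
           \<longrightarrow> (\<forall>u g r. symmetric_RUM_CF u g r \<and> rationalizes D u g r p f \<longrightarrow> u x > u y))"
proof (intro conjI impI allI)
  fix u g r
  assume "symmetric_RUM_CF u g r \<and> rationalizes D u g r p f"
  then have model: "symmetric_RUM_CF u g r" "rationalizes D u g r p f" by simp_all
  note target = tval_common_target_iff[OF assms(1,2) model, THEN iffD1]
    and source = tval_common_source_iff[OF assms(1,2) model, THEN iffD1]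
  show "u x \<ge> u y"
    if "\<exists>z. (\<exists>a b. tval D p f x z = Some a \<and> tval D p f y z = Some b \<and> a \<le> b)
              \<or> (\<exists>a b. tval D p f z x = Some a \<and> tval D p f z y = Some b \<and> a \<ge> b)"
    using that target(2) source(2) by blast
  show "u x > u y"
    if "\<exists>z. (\<exists>a b. tval D p f x z = Some a \<and> tval D p f y z = Some b \<and> a < b)
              \<or> (\<exists>a b. tval D p f z x = Some a \<and> tval D p f z y = Some b \<and> a > b)"
    using that target(1) source(1) by blast
qed

end
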